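(* Any $D$-norm on $\mathbb{R}^{d+1}$ having a generator $\mathbf{Z}=(Z_0,\dots,Z_d)$ with $Z_i>0$ for all $0\le i\le d$ is also an $F$-norm on $\mathbb{R}^{d+1}$.
   Context: A $D$-norm on $\mathbb{R}^{d+1}$ is a norm of the form $\|\mathbf{x}\|_D=E(\max(|x_0|Z_0,\dots,|x_d|Z_d))$, where $\mathbf{Z}$ is componentwise nonnegative with $E(Z_i)=1$ for each $i$ (a generator). An $F$-norm on $\mathbb{R}^{d+1}$ is a norm of the form $E(\max(|x_0|,|x_1|X_1,\dots,|x_d|X_d))$ for a random vector $(X_1,\dots,X_d)$ whose components are a.s. nonnegative with $0<E(X_i)<\infty$. *)

theory Defs
  imports "HOL-Probability.Probability"
begin

text \<open>Vectors in R^(d+1) are functions nat => real, only indices 0..d matter.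
  A random vector on M is a function omega => (nat => real).\<close>

definition is_D_generator :: "'a measure \<Rightarrow> nat \<Rightarrow> ('a \<Rightarrow> nat \<Rightarrow> real) \<Rightarrow> bool" where
  "is_D_generator M d Z \<longleftrightarrow> prob_space M \<and>
     (\<forall>i\<le>d. (\<lambda>\<omega>. Z \<omega> i) \<in> borel_measurable M \<and> (AE \<omega> in M. Z \<omega> i \<ge> 0) \<and>
        integrable M (\<lambda>\<omega>. Z \<omega> i) \<and> integral\<^sup>L M (\<lambda>\<omega>. Z \<omega> i) = 1)"

definition D_norm :: "'a measure \<Rightarrow> nat \<Rightarrow> ('a \<Rightarrow> nat \<Rightarrow> real) \<Rightarrow> (nat \<Rightarrow> real) \<Rightarrow> real" where
  "D_norm M d Z x = integral\<^sup>L M (\<lambda>\<omega>. Max ((\<lambda>i. \<bar>x i\<bar> * Z \<omega> i) ` {..d}))"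

text \<open>Generator of an F-norm: components X_1..X_d (index 0 unused).\<close>
definition is_F_generator :: "'a measure \<Rightarrow> nat \<Rightarrow> ('a \<Rightarrow> nat \<Rightarrow> real) \<Rightarrow> bool" where
  "is_F_generator M d X \<longleftrightarrow> prob_space M \<and>
     (\<forall>i\<in>{1..d}. (\<lambda>\<omega>. X \<omega> i) \<in> borel_measurable M \<and> (AE \<omega> in M. X \<omega> i \<ge> 0) \<and>
        integrable M (\<lambda>\<omega>. X \<omega> i) \<and> integral\<^sup>L M (\<lambda>\<omega>. X \<omega> i) > 0)"

definition F_norm :: "'a measure \<Rightarrow> nat \<Rightarrow> ('a \<Rightarrow> nat \<Rightarrow> real) \<Rightarrow> (nat \<Rightarrow> real) \<Rightarrow> real" where
  "F_norm M d X x = integral\<^sup>L M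
     (\<lambda>\<omega>. Max ((\<lambda>i. if i = 0 then \<bar>x 0\<bar> else \<bar>x i\<bar> * X \<omega> i) ` {..d}))"

end

theory Submission
  imports Defs
begin

text \<open>Change of measure: under the probability measure with density \<open>Z\<^sub>0\<close>, the ratios
  \<open>X\<^sub>i = Z\<^sub>i / Z\<^sub>0\<close> have expectations \<open>E\<^sub>N(X\<^sub>i) = E(Z\<^sub>i) = 1\<close>, and since \<open>Z\<^sub>0 > 0\<close> pulls out of the maximum,
  \<open>E\<^sub>N(max(\<bar>x\<^sub>0\<bar>, \<bar>x\<^sub>i\<bar> X\<^sub>i)) = E(Z\<^sub>0 max(\<bar>x\<^sub>0\<bar>, \<bar>x\<^sub>i\<bar> Z\<^sub>i / Z\<^sub>0)) = E(max \<bar>x\<^sub>i\<bar> Z\<^sub>i)\<close>.\<close>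

lemma Max_image_mult_left:
  fixes f :: "'a \<Rightarrow> 'b::linordered_semiring"
  assumes "finite A" "A \<noteq> {}" "0 \<le> c"
  shows "c * Max (f ` A) = Max ((\<lambda>i. c * f i) ` A)"
proof -
  have "mono (\<lambda>y. c * y)"
    using assms(3) by (auto intro: monoI mult_left_mono)
  then have "c * Max (f ` A) = Max ((\<lambda>y. c * y) ` f ` A)"
    using assms(1,2) by (intro mono_Max_commute) auto
  then show ?thesis
    by (simp only: image_image)
qed

lemma prob_space_density_integral_eq_1:
  fixes g :: "'a \<Rightarrow> real"
  assumes [measurable]: "g \<in> borel_measurable M"
    and "AE x in M. 0 \<le> g x" "integrable M g" "integral\<^sup>L M g = 1"
  shows "prob_space (density M g)"
proof (rule prob_spaceI)
  have "emeasure (density M g) (space (density M g))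
      = (\<integral>\<^sup>+ x. ennreal (g x) * indicator (space M) x \<partial>M)"
    by (simp add: emeasure_density)
  also have "\<dots> = (\<integral>\<^sup>+ x. ennreal (g x) \<partial>M)"
    by (rule nn_integral_cong) simp
  also have "\<dots> = ennreal (integral\<^sup>L M g)"
    using assms by (simp add: nn_integral_eq_integral)
  finally show "emeasure (density M g) (space (density M g)) = 1"
    using assms(4) by simp
qed

lemma
  fixes f g h :: "'a \<Rightarrow> real"
  assumes [measurable]: "f \<in> borel_measurable M" "g \<in> borel_measurable M" "h \<in> borel_measurable M"
    and "AE x in M. 0 \<le> g x" "AE x in M. g x * f x = h x"
  shows integrable_density_AE_mult: "integrable (density M g) f \<longleftrightarrow> integrable M h"
    and integral_density_AE_mult: "integral\<^sup>L (density M g) f = integral\<^sup>L M h"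
  using assms integrable_real_density[of g M f] integral_real_density[of g M f]
    integrable_cong_AE[of "\<lambda>x. g x * f x" M h] integral_cong_AE[of "\<lambda>x. g x * f x" M h]
  by auto

lemma is_F_generator_density_ratio:
  assumes Z: "is_D_generator M d Z" and pos: "AE \<omega> in M. 0 < Z \<omega> 0"
  shows "is_F_generator (density M (\<lambda>\<omega>. Z \<omega> 0)) d (\<lambda>\<omega> i. Z \<omega> i / Z \<omega> 0)"
  unfolding is_F_generator_def
proof (intro conjI ballI)
  have [measurable]: "(\<lambda>\<omega>. Z \<omega> i) \<in> borel_measurable M" if "i \<le> d" for i
    using Z that by (simp add: is_D_generator_def)
  have nonneg: "AE \<omega> in M. 0 \<le> Z \<omega> i" if "i \<le> d" for i
    using Z that by (simp add: is_D_generator_def)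
  have int: "integrable M (\<lambda>\<omega>. Z \<omega> i)" "integral\<^sup>L M (\<lambda>\<omega>. Z \<omega> i) = 1" if "i \<le> d" for i
    using Z that by (simp_all add: is_D_generator_def)
  show "prob_space (density M (\<lambda>\<omega>. Z \<omega> 0))"
    using nonneg[of 0] int[of 0] by (intro prob_space_density_integral_eq_1) auto
  fix i assume "i \<in> {1..d}"
  then have i: "i \<le> d" by simp
  have cancel: "AE \<omega> in M. Z \<omega> 0 * (Z \<omega> i / Z \<omega> 0) = Z \<omega> i"
    using pos by eventually_elim simp
  show "(\<lambda>\<omega>. Z \<omega> i / Z \<omega> 0) \<in> borel_measurable (density M (\<lambda>\<omega>. Z \<omega> 0))"
    using i by simp
  show "AE \<omega> in density M (\<lambda>\<omega>. Z \<omega> 0). 0 \<le> Z \<omega> i / Z \<omega> 0"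
    using i nonneg[of i] nonneg[of 0] by (subst AE_density) auto
  show "integrable (density M (\<lambda>\<omega>. Z \<omega> 0)) (\<lambda>\<omega>. Z \<omega> i / Z \<omega> 0)"
    using i nonneg[of 0] cancel int[of i] by (subst integrable_density_AE_mult) auto
  show "0 < integral\<^sup>L (density M (\<lambda>\<omega>. Z \<omega> 0)) (\<lambda>\<omega>. Z \<omega> i / Z \<omega> 0)"
    using i nonneg[of 0] cancel int[of i] by (subst integral_density_AE_mult) auto
qed

lemma D_norm_eq_F_norm_density_ratio:
  assumes Z: "is_D_generator M d Z" and pos: "AE \<omega> in M. 0 < Z \<omega> 0"
  shows "D_norm M d Z x = F_norm (density M (\<lambda>\<omega>. Z \<omega> 0)) d (\<lambda>\<omega> i. Z \<omega> i / Z \<omega> 0) x"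
proof -
  have [measurable]: "(\<lambda>\<omega>. Z \<omega> i) \<in> borel_measurable M" if "i \<le> d" for i
    using Z that by (simp add: is_D_generator_def)
  define F where "F \<omega> = Max ((\<lambda>i. if i = 0 then \<bar>x 0\<bar> else \<bar>x i\<bar> * (Z \<omega> i / Z \<omega> 0)) ` {..d})"
    for \<omega>
  define D where "D \<omega> = Max ((\<lambda>i. \<bar>x i\<bar> * Z \<omega> i) ` {..d})" for \<omega>
  have [measurable]: "F \<in> borel_measurable M" "D \<in> borel_measurable M"
    unfolding F_def D_def by (intro borel_measurable_Max; simp)+
  have "AE \<omega> in M. Z \<omega> 0 * F \<omega> = D \<omega>"
    using pos
  proof eventually_elim
    case (elim \<omega>)
    then have "Z \<omega> 0 * F \<omega>
        = Max ((\<lambda>i. Z \<omega> 0 * (if i = 0 then \<bar>x 0\<bar> else \<bar>x i\<bar> * (Z \<omega> i / Z \<omega> 0))) ` {..d})"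
      unfolding F_def by (intro Max_image_mult_left) auto
    also have "\<dots> = D \<omega>"
      unfolding D_def using elim by (intro arg_cong[where f = Max] image_cong) auto
    finally show ?case .
  qed
  moreover have "AE \<omega> in M. 0 \<le> Z \<omega> 0"
    using pos by eventually_elim simp
  ultimately have "integral\<^sup>L (density M (\<lambda>\<omega>. Z \<omega> 0)) F = integral\<^sup>L M D"
    by (intro integral_density_AE_mult) auto
  then show ?thesis
    unfolding D_norm_def F_norm_def F_def[symmetric] D_def[symmetric] by simp
qed

theorem corollary2p20:
  fixes M :: "'a measure" and d :: nat and Z :: "'a \<Rightarrow> nat \<Rightarrow> real"
  assumes "is_D_generator M d Z"
    and "\<forall>i\<le>d. AE \<omega> in M. Z \<omega> i > 0"
  shows "\<exists>(N :: 'a measure) X. is_F_generator N d X \<and> (\<forall>x. D_norm M d Z x = F_norm N d X x)"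
proof -
  have "AE \<omega> in M. 0 < Z \<omega> 0"
    using assms(2) by simp
  then show ?thesis
    using assms(1) is_F_generator_density_ratio D_norm_eq_F_norm_density_ratio by blast
qed

end
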